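(* Let $g$ be a good probability density. Let $\mathbf Z=(Z_1,Z_2,\ldots)$ be i.i.d. with density $g$. Let $\mathbf X=(X_1,X_2,\ldots)$ be independent of $\mathbf Z$ with distribution absolutely continuous with respect to that of $\mathbf Z$. Let $\mathcal I=\{I_1,\ldots,I_d\}\subseteq\mathbb N$ be an a.s. finite (possibly empty) set of distinct indices chosen as a measurable function of $\mathbf X$, let $X^*=\max\{X_{I_1},\ldots,X_{I_d}\}$, and define $$Y_k=\begin{cases}2X^*+Z_j&\text{if }k=I_j\text{ for some }1\le j\le d,\\ X_k&\text{if }k\notin\mathcal I.\end{cases}$$ Then the distribution of $\mathbf Y=(Y_k)_{k\in\mathbb N}$ is absolutely continuous with respect to that of $\mathbf Z$.
   Context: A probability density $g$ is good if its support is $\mathbb{R}_+=[0,\infty)$ and for every $K>0$ there is a constant $C(K)$ with $\sup_{u\in(0,\infty),\,x\in(0,K]}g(u-x)/g(u)\le C(K)$ (with $g=0$ on $(-\infty,0)$). Example: the Exponential density. *)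

theory Defs
  imports "HOL-Probability.Probability"
begin

definition prob_density :: "(real \<Rightarrow> real) \<Rightarrow> bool" where
  "prob_density g \<longleftrightarrow> g \<in> borel_measurable borel \<and> (\<forall>u. 0 \<le> g u)
     \<and> integrable lborel g \<and> integral\<^sup>L lborel g = 1"

definition good_density :: "(real \<Rightarrow> real) \<Rightarrow> bool" where
  "good_density g \<longleftrightarrow> prob_density g
     \<and> (\<forall>u<0. g u = 0) \<and> (\<forall>u>0. g u > 0)
     \<and> (\<forall>K>0. \<exists>C. \<forall>u>0. \<forall>x\<in>{0<..K}. g (u - x) / g u \<le> C)"

abbreviation seq_space :: "(nat \<Rightarrow> real) measure" where
  "seq_space \<equiv> \<Pi>\<^sub>M i\<in>UNIV. borel"

abbreviation iid_law :: "(real \<Rightarrow> real) \<Rightarrow> (nat \<Rightarrow> real) measure" where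
  "iid_law g \<equiv> \<Pi>\<^sub>M i\<in>UNIV. density lborel (\<lambda>u. ennreal (g u))"

text \<open>The value None encodes the null event on which the index set is
  infinite; there Y is (arbitrarily) set to x. Z_j (1-based) is z (j-1).\<close>
definition Ymap :: "(nat \<Rightarrow> real) \<Rightarrow> (nat \<Rightarrow> real) \<Rightarrow> nat list option \<Rightarrow> nat \<Rightarrow> real" where
  "Ymap x z L k = (case L of None \<Rightarrow> x k
     | Some l \<Rightarrow> (if k \<in> set l
          then 2 * Max (x ` set l) + z (THE j. j < length l \<and> l ! j = k)
          else x k))"

end

theory Submission
  imports Defs
begin

(* Replace the entries of x at the indices I_1, ..., I_d one at a time. At each stage the
   new entry is c + v, where c = 2 X* >= 0 depends only on x and v is a fresh coordinate of
   an independent iid sequence. Since g vanishes on (-oo,0) and is positive on (0,oo), the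
   law of c + v is absolutely continuous with respect to that of v for every c >= 0, and by
   Fubini resampling one coordinate of an iid sequence in this way preserves absolute
   continuity with respect to the iid law. Mixing over X, whose law is absolutely continuous
   with respect to the iid law, preserves it as well. *)

lemma absolutely_continuous_distrI:
  assumes F: "F \<in> L \<rightarrow>\<^sub>M \<mu>" and null: "\<And>N. N \<in> null_sets \<mu> \<Longrightarrow> AE p in L. F p \<notin> N"
  shows "absolutely_continuous \<mu> (distr L \<mu> F)"
  unfolding absolutely_continuous_def
proof
  fix N assume N: "N \<in> null_sets \<mu>"
  have "F -` N \<inter> space L \<in> sets L"
    using N by (intro measurable_sets[OF F]) auto
  then have "F -` N \<inter> space L \<in> null_sets L"
    using null[OF N] by (auto simp: AE_iff_null Int_def conj_commute)
  then show "N \<in> null_sets (distr L \<mu> F)"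
    using N by (auto simp: null_sets_distr_iff[OF F])
qed

lemma AE_absolutely_continuous_distrD:
  assumes "AE y in \<mu>. P y" "F \<in> L \<rightarrow>\<^sub>M \<mu>" "absolutely_continuous \<mu> (distr L \<mu> F)"
  shows "AE p in L. P (F p)"
  using assms by (intro AE_distrD[of F L \<mu>] absolutely_continuous_AE[of "distr L \<mu> F" \<mu>]) auto

lemma AE_PiM_update_iff:
  assumes M: "\<And>i. i \<in> I \<Longrightarrow> prob_space (M i)" and k: "k \<in> I"
    and P: "Measurable.pred (PiM I M) P"
  shows "(AE z in PiM I M. P z) \<longleftrightarrow> (AE z in PiM I M. AE v in M k. P (z(k := v)))"
proof -
  interpret Mk: prob_space "M k" using M k .
  interpret PiM: prob_space "PiM I M" using M by (rule prob_space_PiM)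
  interpret pair_sigma_finite "M k" "PiM I M" ..
  have resample: "distr (M k \<Otimes>\<^sub>M PiM I M) (PiM I M) (\<lambda>q. (snd q)(k := fst q)) = PiM I M"
    using distr_pair_PiM_eq_PiM[of I M k] M k by (simp add: insert_absorb split_beta')
  have upd: "(\<lambda>q. (snd q)(k := fst q)) \<in> M k \<Otimes>\<^sub>M PiM I M \<rightarrow>\<^sub>M PiM I M"
    using k by (intro measurable_fun_upd[where J=I]) auto
  have P_upd: "{q \<in> space (M k \<Otimes>\<^sub>M PiM I M). P ((snd q)(k := fst q))} \<in> sets (M k \<Otimes>\<^sub>M PiM I M)"
    using measurable_compose[OF upd P] by (simp add: pred_def)
  have "(AE z in PiM I M. P z) \<longleftrightarrow> (AE q in M k \<Otimes>\<^sub>M PiM I M. P ((snd q)(k := fst q)))"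
    using P by (subst (1) resample[symmetric], subst AE_distr_iff[OF upd]) (auto simp: pred_def)
  also have "\<dots> \<longleftrightarrow> (AE v in M k. AE z in PiM I M. P (z(k := v)))"
    using P_upd by (rule AE_pair_iff[symmetric])
  also have "\<dots> \<longleftrightarrow> (AE z in PiM I M. AE v in M k. P (z(k := v)))"
    using P_upd by (rule AE_commute)
  finally show ?thesis .
qed

lemma absolutely_continuous_pair_measure:
  assumes "sigma_finite_measure \<mu>" "sigma_finite_measure \<nu>" "sigma_finite_measure \<rho>"
    and sets_eq: "sets \<nu> = sets \<mu>" and ac: "absolutely_continuous \<mu> \<nu>"
  shows "absolutely_continuous (\<mu> \<Otimes>\<^sub>M \<rho>) (\<nu> \<Otimes>\<^sub>M \<rho>)"
  unfolding absolutely_continuous_def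
proof
  fix N assume N: "N \<in> null_sets (\<mu> \<Otimes>\<^sub>M \<rho>)"
  interpret \<mu>\<rho>: pair_sigma_finite \<mu> \<rho> using assms by (simp add: pair_sigma_finite_def)
  interpret \<nu>\<rho>: pair_sigma_finite \<nu> \<rho> using assms by (simp add: pair_sigma_finite_def)
  have sets_pair_eq: "sets (\<nu> \<Otimes>\<^sub>M \<rho>) = sets (\<mu> \<Otimes>\<^sub>M \<rho>)"
    using sets_eq by (rule sets_pair_measure_cong) simp
  have N_sets: "N \<in> sets (\<nu> \<Otimes>\<^sub>M \<rho>)"
    using N sets_pair_eq by (auto dest: null_setsD2)
  have "AE x in \<mu>. AE y in \<rho>. (x, y) \<notin> N"
    using AE_not_in[OF N] by (rule \<mu>\<rho>.AE_pair)
  then have "AE x in \<nu>. AE y in \<rho>. (x, y) \<notin> N"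
    by (rule absolutely_continuous_AE[OF sets_eq ac])
  then have "AE p in \<nu> \<Otimes>\<^sub>M \<rho>. p \<notin> N"
    by (rule \<nu>\<rho>.AE_pair_measure[rotated]) (use N_sets in \<open>simp add: Collect_neg_eq[symmetric]\<close>)
  then show "N \<in> null_sets (\<nu> \<Otimes>\<^sub>M \<rho>)"
    using N_sets by (simp add: AE_iff_null_sets)
qed

lemma AE_fun_upd_absolutely_continuous:
  assumes "\<And>i. i \<in> I \<Longrightarrow> prob_space (M i)" "k \<in> I"
    and F: "F \<in> L \<rightarrow>\<^sub>M PiM I M" "absolutely_continuous (PiM I M) (distr L (PiM I M) F)"
    and N: "N \<in> null_sets (PiM I M)"
  shows "AE p in L. AE v in M k. (F p)(k := v) \<notin> N"
proof -
  have "Measurable.pred (PiM I M) (\<lambda>z. z \<notin> N)"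
    using N by (auto simp: pred_def Collect_neg_eq[symmetric] dest: null_setsD2)
  then have "AE z in PiM I M. AE v in M k. z(k := v) \<notin> N"
    using AE_not_in[OF N] assms(1,2) by (subst (asm) AE_PiM_update_iff) auto
  then show ?thesis
    using F by (rule AE_absolutely_continuous_distrD)
qed

lemma AE_pair_PiM_resample:
  assumes "\<And>i. i \<in> I \<Longrightarrow> prob_space (M i)" "k \<in> I" "sigma_finite_measure L"
    and P: "Measurable.pred (L \<Otimes>\<^sub>M PiM I M) P"
    and resampled: "AE x in L. AE z in PiM I M. AE v in M k. P (x, z(k := v))"
  shows "AE p in L \<Otimes>\<^sub>M PiM I M. P p"
proof -
  interpret PiM: prob_space "PiM I M"
    using assms(1) by (rule prob_space_PiM)
  interpret pair_sigma_finite L "PiM I M"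
    using assms(3) by (simp add: pair_sigma_finite_def PiM.sigma_finite_measure_axioms)
  have "AE x in L. AE z in PiM I M. P (x, z)"
    using resampled AE_space
  proof eventually_elim
    case (elim x)
    have "Measurable.pred (PiM I M) (\<lambda>z. P (x, z))"
      using P elim(2) by (rule measurable_Pair2)
    with elim(1) show ?case
      using assms(1,2) by (subst AE_PiM_update_iff[where k=k]) auto
  qed
  then show ?thesis
    using P by (intro AE_pair_measure) (auto simp: pred_def)
qed

abbreviation lborel_density :: "(real \<Rightarrow> real) \<Rightarrow> real measure" where
  "lborel_density g \<equiv> density lborel (\<lambda>u. ennreal (g u))"

lemma prob_space_lborel_density:
  assumes "prob_density g"
  shows "prob_space (lborel_density g)"
proof (rule prob_spaceI)
  have g: "g \<in> borel_measurable borel" "\<And>u. 0 \<le> g u" "integrable lborel g" "integral\<^sup>L lborel g = 1"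
    using assms by (auto simp: prob_density_def)
  then have "(\<integral>\<^sup>+ u. ennreal (g u) \<partial>lborel) = 1"
    by (subst nn_integral_eq_integral) auto
  then show "emeasure (lborel_density g) (space (lborel_density g)) = 1"
    using g by (simp add: emeasure_density)
qed

lemma AE_lborel_density_nonneg:
  assumes "g \<in> borel_measurable borel" "\<And>u. u < 0 \<Longrightarrow> g u = 0"
  shows "AE v in lborel_density g. 0 \<le> v"
proof -
  have "AE v in lborel. 0 < ennreal (g v) \<longrightarrow> 0 \<le> v"
    using assms(2) by (intro AE_I2) (metis ennreal_eq_0_iff less_irrefl not_le)
  then show ?thesis
    using assms(1) by (subst AE_density) auto
qed

lemma AE_lborel_density_shift:
  assumes g: "g \<in> borel_measurable borel" "\<And>u. u < 0 \<Longrightarrow> g u = 0" "\<And>u. 0 < u \<Longrightarrow> 0 < g u"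
    and "0 \<le> c" and "AE v in lborel_density g. P v"
  shows "AE v in lborel_density g. P (c + v)"
proof -
  have "AE v in lborel. 0 < g v \<longrightarrow> P v"
    using assms(5) g(1) by (subst (asm) AE_density) auto
  then have "AE v in lborel. 0 < v \<longrightarrow> P v"
    by eventually_elim (use g(3) in auto)
  then have "AE v in lborel. 0 < c + v \<longrightarrow> P (c + v)"
    by (subst (asm) lborel_distr_plus[of c, symmetric]) (rule AE_distrD[rotated], measurable)
  then have "AE v in lborel. 0 < g v \<longrightarrow> P (c + v)"
    using AE_lborel_singleton[of 0] \<comment> \<open>the case c = v = 0\<close>
    by eventually_elim (use g(2) \<open>0 \<le> c\<close> in \<open>force simp: not_less\<close>)
  then show ?thesis
    using g(1) by (subst AE_density) auto
qed

(* The shift is computed from the original x, so it is not affected by earlier replacements. *)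
definition Ymap_prefix :: "nat list \<Rightarrow> nat \<Rightarrow> (nat \<Rightarrow> real) \<times> (nat \<Rightarrow> real) \<Rightarrow> nat \<Rightarrow> real" where
  "Ymap_prefix l n p k = (if k \<in> set (take n l)
     then 2 * Max (fst p ` set l) + snd p (THE j. j < length l \<and> l ! j = k)
     else fst p k)"

lemma Ymap_prefix_0: "Ymap_prefix l 0 = fst"
  by (simp add: Ymap_prefix_def fun_eq_iff)

lemma Ymap_prefix_length: "Ymap_prefix l (length l) (x, z) = Ymap x z (Some l)"
  by (simp add: Ymap_prefix_def Ymap_def fun_eq_iff)

lemma Ymap_prefix_Suc:
  assumes "distinct l" "n < length l"
  shows "Ymap_prefix l (Suc n) (x, z(n := v)) = (Ymap_prefix l n (x, z))(l ! n := 2 * Max (x ` set l) + v)"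
proof -
  have index: "(THE j. j < length l \<and> l ! j = l ! i) = i" if "i < length l" for i
    using assms(1) that by (intro the_equality) (auto simp: nth_eq_iff_index_eq)
  have "take (Suc n) l = take n l @ [l ! n]"
    using assms(2) by (simp add: take_Suc_conv_app_nth)
  then show ?thesis
    using assms by (auto simp: Ymap_prefix_def fun_eq_iff in_set_conv_nth index nth_eq_iff_index_eq)
qed

lemma measurable_Ymap_prefix [measurable]:
  "Ymap_prefix l n \<in> seq_space \<Otimes>\<^sub>M seq_space \<rightarrow>\<^sub>M seq_space"
proof (rule measurable_PiM_single')
  fix k :: nat
  show "(\<lambda>p. Ymap_prefix l n p k) \<in> borel_measurable (seq_space \<Otimes>\<^sub>M seq_space)"
    unfolding Ymap_prefix_def by measurable
qed (simp add: space_PiM)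

lemma prob_space_iid_law: "prob_density g \<Longrightarrow> prob_space (iid_law g)"
  by (intro prob_space_PiM prob_space_lborel_density)

lemma AE_iid_law_nonneg:
  assumes "prob_density g" "\<And>u. u < 0 \<Longrightarrow> g u = 0"
  shows "AE x in iid_law g. \<forall>k. 0 \<le> x k"
  unfolding AE_all_countable
  using assms by (auto simp: prob_density_def intro!: AE_PiM_component prob_space_lborel_density
      AE_lborel_density_nonneg)

lemma absolutely_continuous_Ymap_prefix:
  assumes g: "prob_density g" "\<And>u. u < 0 \<Longrightarrow> g u = 0" "\<And>u. 0 < u \<Longrightarrow> 0 < g u"
    and l: "distinct l"
  shows "n \<le> length l \<Longrightarrow>
    absolutely_continuous (iid_law g) (distr (iid_law g \<Otimes>\<^sub>M iid_law g) (iid_law g) (Ymap_prefix l n))"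
proof (induction n)
  case 0
  interpret \<mu>: prob_space "iid_law g"
    using g(1) by (rule prob_space_iid_law)
  show ?case
    by (simp add: Ymap_prefix_0 \<mu>.distr_pair_fst absolutely_continuous_def)
next
  case (Suc n)
  interpret \<mu>: prob_space "iid_law g"
    using g(1) by (rule prob_space_iid_law)
  interpret \<mu>\<mu>: pair_sigma_finite "iid_law g" "iid_law g" ..
  have G: "prob_space (lborel_density g)"
    using g(1) by (rule prob_space_lborel_density)
  have nonneg: "AE x in iid_law g. \<forall>k. 0 \<le> x k"
    using g(1,2) by (rule AE_iid_law_nonneg)
  have n: "n < length l"
    using Suc.prems by simp
  have IH: "absolutely_continuous (iid_law g) (distr (iid_law g \<Otimes>\<^sub>M iid_law g) (iid_law g) (Ymap_prefix l n))"
    using Suc n by simp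
  show ?case
  proof (rule absolutely_continuous_distrI)
    show "Ymap_prefix l (Suc n) \<in> iid_law g \<Otimes>\<^sub>M iid_law g \<rightarrow>\<^sub>M iid_law g"
      by measurable
    fix N assume N: "N \<in> null_sets (iid_law g)"
    have [measurable]: "N \<in> sets seq_space"
      using null_setsD2[OF N] by (subst sets_PiM_cong[OF refl]) auto
    have "AE p in iid_law g \<Otimes>\<^sub>M iid_law g. AE v in lborel_density g. (Ymap_prefix l n p)(l ! n := v) \<notin> N"
      by (rule AE_fun_upd_absolutely_continuous[OF _ _ _ IH N]) (simp_all add: G, measurable)
    then have "AE x in iid_law g. AE z in iid_law g. AE v in lborel_density g.
        (Ymap_prefix l n (x, z))(l ! n := v) \<notin> N"
      by (rule \<mu>\<mu>.AE_pair)
    then have "AE x in iid_law g. AE z in iid_law g. AE v in lborel_density g.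
        Ymap_prefix l (Suc n) (x, z(n := v)) \<notin> N"
      using nonneg
    proof eventually_elim
      case (elim x)
      have c: "0 \<le> 2 * Max (x ` set l)"
        using elim(2) n by (intro mult_nonneg_nonneg order_trans[OF _ Max_ge[of _ "x (l ! n)"]]) auto
      from elim(1) show ?case
      proof eventually_elim
        case (elim z)
        then show ?case
          unfolding Ymap_prefix_Suc[OF l n]
          using AE_lborel_density_shift[of g _ "\<lambda>w. (Ymap_prefix l n (x, z))(l ! n := w) \<notin> N"] g c
          by (simp add: prob_density_def)
      qed
    qed
    then show "AE p in iid_law g \<Otimes>\<^sub>M iid_law g. Ymap_prefix l (Suc n) p \<notin> N"
      using G by (intro AE_pair_PiM_resample[where k=n]) (auto intro: \<mu>.sigma_finite_measure_axioms)
  qed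
qed

lemma measurable_Ymap_idx [measurable]:
  assumes [measurable]: "idx \<in> seq_space \<rightarrow>\<^sub>M count_space UNIV"
  shows "(\<lambda>(x, z). Ymap x z (idx x)) \<in> seq_space \<Otimes>\<^sub>M seq_space \<rightarrow>\<^sub>M seq_space"
proof -
  have Ymap_eq: "(\<lambda>(x, z). Ymap x z L) = (case L of None \<Rightarrow> fst | Some l \<Rightarrow> Ymap_prefix l (length l))" for L
    by (cases L) (auto simp: fun_eq_iff Ymap_prefix_length Ymap_def)
  have "(\<lambda>p. (\<lambda>(x, z). Ymap x z (idx (fst p))) p) \<in> seq_space \<Otimes>\<^sub>M seq_space \<rightarrow>\<^sub>M seq_space"
    by (rule measurable_compose_countable[where f="\<lambda>L. \<lambda>(x, z). Ymap x z L"])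
      (auto simp: Ymap_eq split: option.split)
  then show ?thesis
    by (simp add: split_beta')
qed

lemma absolutely_continuous_Ymap:
  assumes g: "prob_density g" "\<And>u. u < 0 \<Longrightarrow> g u = 0" "\<And>u. 0 < u \<Longrightarrow> 0 < g u"
    and \<nu>: "prob_space \<nu>" "sets \<nu> = sets seq_space" "absolutely_continuous (iid_law g) \<nu>"
    and idx: "idx \<in> seq_space \<rightarrow>\<^sub>M count_space UNIV" "AE x in \<nu>. idx x \<noteq> None"
      "\<And>x l. idx x = Some l \<Longrightarrow> distinct l"
  shows "absolutely_continuous (iid_law g) (distr (\<nu> \<Otimes>\<^sub>M iid_law g) (iid_law g) (\<lambda>(x, z). Ymap x z (idx x)))"
proof -
  interpret \<mu>: prob_space "iid_law g"
    using prob_space_lborel_density[OF g(1)] by (rule prob_space_PiM)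
  interpret \<nu>: prob_space \<nu> by fact
  interpret \<nu>\<mu>: pair_sigma_finite \<nu> "iid_law g" ..
  have sets_\<nu>: "sets \<nu> = sets (iid_law g)"
    using \<nu>(2) by (simp cong: sets_PiM_cong)
  note [measurable] = idx(1)
  have \<nu>\<mu>_ac: "absolutely_continuous (iid_law g \<Otimes>\<^sub>M iid_law g) (\<nu> \<Otimes>\<^sub>M iid_law g)"
    using sets_\<nu> \<nu>(3) by (intro absolutely_continuous_pair_measure) unfold_locales
  show ?thesis
  proof (rule absolutely_continuous_distrI)
    show "(\<lambda>(x, z). Ymap x z (idx x)) \<in> \<nu> \<Otimes>\<^sub>M iid_law g \<rightarrow>\<^sub>M iid_law g"
      using sets_\<nu> by measurable
    fix N assume N: "N \<in> null_sets (iid_law g)"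
    have "AE p in iid_law g \<Otimes>\<^sub>M iid_law g. Ymap_prefix l (length l) p \<notin> N" if "distinct l" for l
      using AE_not_in[OF N]
      by (rule AE_absolutely_continuous_distrD[OF _ _ absolutely_continuous_Ymap_prefix[OF g that order_refl]])
        measurable
    then have "AE p in iid_law g \<Otimes>\<^sub>M iid_law g. \<forall>l. distinct l \<longrightarrow> Ymap_prefix l (length l) p \<notin> N"
      by (simp add: AE_all_countable)
    then have "AE p in \<nu> \<Otimes>\<^sub>M iid_law g. \<forall>l. distinct l \<longrightarrow> Ymap_prefix l (length l) p \<notin> N"
      by (rule absolutely_continuous_AE[OF _ \<nu>\<mu>_ac, rotated]) (simp add: sets_\<nu> cong: sets_pair_measure_cong)
    moreover have "AE p in \<nu> \<Otimes>\<^sub>M iid_law g. idx (fst p) \<noteq> None"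
    proof (rule \<nu>\<mu>.AE_pair_measure)
      show "{p \<in> space (\<nu> \<Otimes>\<^sub>M iid_law g). idx (fst p) \<noteq> None} \<in> sets (\<nu> \<Otimes>\<^sub>M iid_law g)"
        using \<nu>(2) by measurable
      show "AE x in \<nu>. AE z in iid_law g. idx (fst (x, z)) \<noteq> None"
        using idx(2) by simp
    qed
    ultimately show "AE p in \<nu> \<Otimes>\<^sub>M iid_law g. (\<lambda>(x, z). Ymap x z (idx x)) p \<notin> N"
      by eventually_elim (auto simp: Ymap_prefix_length[symmetric] idx(3) split: prod.split)
  qed
qed

theorem mainTheorem10:
  fixes M :: "'a measure" and g :: "real \<Rightarrow> real"
    and X Z :: "'a \<Rightarrow> nat \<Rightarrow> real"
    and idx :: "(nat \<Rightarrow> real) \<Rightarrow> nat list option"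
  assumes "prob_space M"
    and "good_density g"
    and "Z \<in> M \<rightarrow>\<^sub>M seq_space"
    and "X \<in> M \<rightarrow>\<^sub>M seq_space"
    and "distr M seq_space Z = iid_law g"
    and "prob_space.indep_var M seq_space X seq_space Z"
    and "absolutely_continuous (distr M seq_space Z) (distr M seq_space X)"
    and "idx \<in> seq_space \<rightarrow>\<^sub>M count_space UNIV"
    and "AE \<omega> in M. idx (X \<omega>) \<noteq> None"
    and "\<And>x l. idx x = Some l \<Longrightarrow> distinct l"
  shows "absolutely_continuous (distr M seq_space Z)
           (distr M seq_space (\<lambda>\<omega>. Ymap (X \<omega>) (Z \<omega>) (idx (X \<omega>))))"
proof -
  interpret prob_space M by fact
  note [measurable] = assms(3,4,8)
  have g: "prob_density g" "\<And>u. u < 0 \<Longrightarrow> g u = 0" "\<And>u. 0 < u \<Longrightarrow> 0 < g u"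
    using assms(2) by (auto simp: good_density_def)
  have joint_law: "distr M (seq_space \<Otimes>\<^sub>M seq_space) (\<lambda>\<omega>. (X \<omega>, Z \<omega>)) = distr M seq_space X \<Otimes>\<^sub>M iid_law g"
    using indep_var_distribution_eq[of seq_space X seq_space Z] assms(3-6) by simp
  have "distr M seq_space (\<lambda>\<omega>. Ymap (X \<omega>) (Z \<omega>) (idx (X \<omega>)))
      = distr (distr M seq_space X \<Otimes>\<^sub>M iid_law g) (iid_law g) (\<lambda>(x, z). Ymap x z (idx x))"
    by (subst joint_law[symmetric], subst distr_distr) (auto intro!: distr_cong cong: sets_PiM_cong)
  moreover have "AE x in distr M seq_space X. idx x \<noteq> None"
    using assms(9) by (subst AE_distr_iff) auto
  ultimately show ?thesis
    using assms(5,7,10) prob_space_distr[OF assms(4)]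
    by (simp add: absolutely_continuous_Ymap[OF g])
qed

end
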